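(* Let $n\ge 3$. There exists a vertex $w$ of $D_n$ of minimum degree $\delta(D_n)$ such that $\frac n2<w<n$.
   Context: $D_n$ is the graph with vertex set $\{1,\dots,n\}$ in which distinct $a,b$ are adjacent iff $\gcd(a,b)\mid n$ (the maximal Diophantine graph of order $n$; each vertex is identified with its label). $\delta(G)$ denotes the minimum degree of $G$. *)

theory Defs
  imports Main
begin

definition Dn_adj :: "nat \<Rightarrow> nat \<Rightarrow> nat \<Rightarrow> bool" where
  "Dn_adj n a b \<longleftrightarrow> a \<in> {1..n} \<and> b \<in> {1..n} \<and> a \<noteq> b \<and> gcd a b dvd n"

definition Dn_deg :: "nat \<Rightarrow> nat \<Rightarrow> nat" where
  "Dn_deg n v = card {u \<in> {1..n}. Dn_adj n v u}"

definition Dn_min_deg :: "nat \<Rightarrow> nat" where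
  "Dn_min_deg n = Min (Dn_deg n ` {1..n})"

end

theory Submission
  imports Defs
begin

text \<open>A divisor v of n is adjacent to every other vertex, so it has the largest possible degree
  n - 1; then n - 1 (which lies strictly between n/2 and n for n \<ge> 3) has minimum degree
  whenever v does. If a vertex v of minimum degree does not divide n, then every neighbour of a
  multiple w of v is a neighbour of v, because gcd v u divides gcd w u. Taking w the largest
  multiple of v not exceeding n gives w < n (as v does not divide n) and n < w + v \<le> 2 w.\<close>

lemma Dn_deg_le:
  assumes "w \<in> {1..n}"
  shows "Dn_deg n w \<le> n - 1"
proof -
  have "{u \<in> {1..n}. Dn_adj n w u} \<subseteq> {1..n} - {w}"
    by (auto simp: Dn_adj_def)
  then have "Dn_deg n w \<le> card ({1..n} - {w})"
    unfolding Dn_deg_def by (intro card_mono) auto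
  with assms show ?thesis by simp
qed

lemma Dn_deg_divisor:
  assumes "v \<in> {1..n}" "v dvd n"
  shows "Dn_deg n v = n - 1"
proof -
  have "{u \<in> {1..n}. Dn_adj n v u} = {1..n} - {v}"
    using assms by (auto simp: Dn_adj_def intro: dvd_trans)
  with assms show ?thesis by (simp add: Dn_deg_def)
qed

lemma Dn_deg_multiple_le:
  assumes "\<not> v dvd n" "v dvd w" "w \<in> {1..n}"
  shows "Dn_deg n w \<le> Dn_deg n v"
proof -
  have v: "v \<in> {1..n}"
    using assms dvd_imp_le[OF assms(2)] by (cases "v = 0") auto
  have "{u \<in> {1..n}. Dn_adj n w u} \<subseteq> {u \<in> {1..n}. Dn_adj n v u}"
  proof safe
    fix u assume u: "u \<in> {1..n}" "Dn_adj n w u"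
    have "gcd v u dvd gcd w u"
      using assms(2) by (meson gcd_dvd1 gcd_dvd2 gcd_greatest dvd_trans)
    then have "gcd v u dvd n"
      using u(2) by (auto simp: Dn_adj_def intro: dvd_trans)
    moreover from this have "u \<noteq> v"
      using assms(1) by auto
    ultimately show "Dn_adj n v u"
      using u v by (simp add: Dn_adj_def)
  qed
  then show ?thesis
    unfolding Dn_deg_def by (intro card_mono) auto
qed

lemma Dn_min_deg_le:
  assumes "w \<in> {1..n}"
  shows "Dn_min_deg n \<le> Dn_deg n w"
  using assms unfolding Dn_min_deg_def by simp

lemma Dn_min_deg_attained:
  assumes "n \<ge> 1"
  obtains v where "v \<in> {1..n}" "Dn_deg n v = Dn_min_deg n"
proof -
  have "Dn_min_deg n \<in> Dn_deg n ` {1..n}"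
    unfolding Dn_min_deg_def using assms by (intro Min_in) auto
  then show ?thesis using that by auto
qed

lemma less_twice_largest_multiple:
  fixes n v :: nat
  assumes "0 < v" "v \<le> n"
  shows "n < 2 * (n div v * v)"
proof -
  have "1 \<le> n div v"
    using assms by (simp add: div_greater_zero_iff Suc_le_eq)
  then have "v \<le> n div v * v"
    by simp
  moreover have "n < n div v * v + v"
    using assms(1) div_mult_mod_eq[of n v] mod_less_divisor[of v n] by linarith
  ultimately show ?thesis by linarith
qed

theorem mainTheorem16:
  fixes n :: nat
  assumes "n \<ge> 3"
  shows "\<exists>w \<in> {1..n}. Dn_deg n w = Dn_min_deg n \<and> n < 2 * w \<and> w < n"
proof -
  obtain v where v: "v \<in> {1..n}" "Dn_deg n v = Dn_min_deg n"
    using Dn_min_deg_attained[of n] assms by auto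
  obtain w where w: "w \<in> {1..n}" "Dn_deg n w \<le> Dn_deg n v" "n < 2 * w" "w < n"
  proof (cases "v dvd n")
    case True
    have "n - 1 \<in> {1..n}"
      using assms by auto
    moreover have "Dn_deg n (n - 1) \<le> Dn_deg n v"
      using Dn_deg_le[OF calculation] Dn_deg_divisor[OF v(1) True] by simp
    ultimately show ?thesis
      using that assms by simp
  next
    case False
    define m where "m = n div v * v"
    have "m \<le> n"
      unfolding m_def by (rule div_times_less_eq_dividend)
    moreover have "m \<noteq> n"
      using False unfolding m_def by (metis dvd_triv_right)
    moreover have "n < 2 * m"
      unfolding m_def using v(1) by (intro less_twice_largest_multiple) auto
    ultimately have "m \<in> {1..n}" "m < n" "n < 2 * m"
      by auto
    moreover have "Dn_deg n m \<le> Dn_deg n v"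
      using Dn_deg_multiple_le[OF False _ \<open>m \<in> {1..n}\<close>] by (simp add: m_def)
    ultimately show ?thesis
      using that by blast
  qed
  have "Dn_deg n w = Dn_min_deg n"
    using w(2) v(2) Dn_min_deg_le[OF w(1)] by simp
  with w show ?thesis
    by blast
qed

end
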